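(* Let $\mathbb K$ be an infinite field, $k\ge2$, $R=\mathbb K[x_1,\ldots,x_k]$, and let $V=V_1\cup\cdots\cup V_m\subset\mathbb P^{k-1}$ be an essential subspace arrangement with $I(V_i)$ generated by $c_i$ linearly independent linear forms. Let $\aleph=1+\sum_{i=1}^m(c_i-1)$; for each $i$ let $\Lambda_i$ be a collection of $\aleph$ distinct linear forms in $I(V_i)$ any $c_i$ of which generate $I(V_i)$; let $\Lambda=(\ell_1,\ldots,\ell_n)$ be the distinct linear forms occurring in $\Lambda_1\cup\cdots\cup\Lambda_m$, and let $a=n-\aleph+1$. Let $\mathcal C_\Lambda=\phi(\mathbb K^k)\subseteq\mathbb K^n$, where $\phi:\mathbb K^k\to\mathbb K^n$, $\phi(v)=(\ell_1(v),\ldots,\ell_n(v))$, and for each $i$ let $\mathcal D_i=\phi(\widehat V_i)$, where $\widehat V_i\subseteq\mathbb K^k$ is the linear subspace which is the common zero locus of $I(V_i)$. Then each $\mathcal D_i$ is a subcode of $\mathcal C_\Lambda$ with $|\mathrm{Supp}(\mathcal D_i)|\le a-1$, and every subcode $\mathcal D\subseteq\mathcal C_\Lambda$ with $|\mathrm{Supp}(\mathcal D)|\le a-1$ is contained in $\mathcal D_{i_0}$ for some $i_0\in\{1,\ldots,m\}$. Thus $\mathcal D_1,\ldots,\mathcal D_m$ are the maximal subcodes of $\mathcal C_\Lambda$ of support size at most $a-1$.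
   Context: A subspace arrangement $V=V_1\cup\cdots\cup V_m$ (components $V_i$ linear subspaces of $\mathbb P^{k-1}$) is essential if $I(V_1)+\cdots+I(V_m)=\langle x_1,\ldots,x_k\rangle$. Since the $\ell_i$ generate $\langle x_1,\ldots,x_k\rangle$, $\phi$ is injective and $\mathcal C_\Lambda$ is an $[n,k]$ linear code (its generating matrix has as columns the coefficient vectors of the $\ell_i$). A subcode is a $\mathbb K$-linear subspace of $\mathcal C_\Lambda$. For a subcode $\mathcal D$, $\mathrm{Supp}(\mathcal D)=\{i:\exists (y_1,\ldots,y_n)\in\mathcal D\text{ with }y_i\ne0\}$. *)

theory Defs
  imports "HOL-Analysis.Analysis"
begin

text \<open>Linear forms on K^k are represented by their coefficient vectors in K^k;
  evaluation of the form with coefficient vector l at the point v.\<close>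
definition lin_eval :: "'a::field ^ 'k \<Rightarrow> 'a ^ 'k \<Rightarrow> 'a" where
  "lin_eval l v = (\<Sum>j\<in>UNIV. l $ j * v $ j)"

text \<open>Words of length n are functions nat to K that vanish outside the coordinates 0..n-1.
  The evaluation map phi: K^k to K^n, phi(v) = (l_1(v), ..., l_n(v)) (coordinates 0-indexed).\<close>
definition eval_map :: "nat \<Rightarrow> (nat \<Rightarrow> 'a::field ^ 'k) \<Rightarrow> 'a ^ 'k \<Rightarrow> (nat \<Rightarrow> 'a)" where
  "eval_map n ell v = (\<lambda>j. if j < n then lin_eval (ell j) v else 0)"

definition subcode :: "(nat \<Rightarrow> 'a::field) set \<Rightarrow> (nat \<Rightarrow> 'a) set \<Rightarrow> bool" where
  "subcode C D \<longleftrightarrow> D \<subseteq> C \<and> (\<lambda>_. 0) \<in> D \<and>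
     (\<forall>x\<in>D. \<forall>y\<in>D. (\<lambda>j. x j + y j) \<in> D) \<and>
     (\<forall>c. \<forall>x\<in>D. (\<lambda>j. c * x j) \<in> D)"

definition Supp :: "(nat \<Rightarrow> 'a::zero) set \<Rightarrow> nat set" where
  "Supp D = {j. \<exists>y\<in>D. y j \<noteq> 0}"

definition zero_locus :: "('a::field ^ 'k) set \<Rightarrow> ('a ^ 'k) set" where
  "zero_locus I = {v. \<forall>l\<in>I. lin_eval l v = 0}"

end

theory Submission
  imports Defs
begin

text \<open>Coordinate j of a codeword vanishes on the code \<open>\<phi>(Z(I))\<close> whenever \<open>\<ell>\<^sub>j \<in> I\<close>; since each
  \<open>\<Lambda>\<^sub>i\<close> has \<open>\<aleph>\<close> elements, \<open>D\<^sub>i\<close> is supported on at most \<open>n - \<aleph>\<close> coordinates.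
  Conversely, if a subcode \<open>D\<close> has support of size at most \<open>n - \<aleph>\<close>, then the forms \<open>\<ell>\<^sub>j\<close> with
  \<open>j \<notin> Supp D\<close> number at least \<open>\<aleph> = 1 + \<Sum>(c\<^sub>i - 1)\<close>, so by pigeonhole \<open>c\<^sub>i\<close> of them lie in a
  single \<open>\<Lambda>\<^sub>i\<close>. These generate \<open>I(V\<^sub>i)\<close> and vanish on every \<open>v\<close> with \<open>\<phi>(v) \<in> D\<close>, hence
  \<open>D \<subseteq> D\<^sub>i\<close>.\<close>

lemma lin_eval_add_left: "lin_eval (a + b) v = lin_eval a v + lin_eval b v"
  unfolding lin_eval_def by (simp add: distrib_right sum.distrib)

lemma lin_eval_scale_left: "lin_eval (c *s a) v = c * lin_eval a v"
  unfolding lin_eval_def by (simp add: sum_distrib_left mult.assoc)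

lemma lin_eval_zero_left: "lin_eval 0 v = 0"
  unfolding lin_eval_def by simp

lemma lin_eval_add_right: "lin_eval a (v + w) = lin_eval a v + lin_eval a w"
  unfolding lin_eval_def by (simp add: distrib_left sum.distrib)

lemma lin_eval_scale_right: "lin_eval a (c *s v) = c * lin_eval a v"
  unfolding lin_eval_def by (simp add: sum_distrib_left algebra_simps)

lemma lin_eval_zero_right: "lin_eval a 0 = 0"
  unfolding lin_eval_def by simp

lemma lin_eval_span_eq_0:
  assumes "l \<in> vec.span S" "\<And>s. s \<in> S \<Longrightarrow> lin_eval s v = 0"
  shows "lin_eval l v = 0"
proof -
  have "vec.subspace {l. lin_eval l v = 0}"
    unfolding vec.subspace_def
    by (simp add: lin_eval_add_left lin_eval_scale_left lin_eval_zero_left)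
  then show ?thesis
    using vec.span_induct[OF assms(1)] assms(2) by blast
qed

lemma zero_locus_span: "zero_locus (vec.span S) = zero_locus S"
  unfolding zero_locus_def using lin_eval_span_eq_0 vec.span_base by blast

lemma eval_map_add: "eval_map n ell (v + w) = (\<lambda>j. eval_map n ell v j + eval_map n ell w j)"
  unfolding eval_map_def by (auto simp: lin_eval_add_right)

lemma eval_map_scale: "eval_map n ell (c *s v) = (\<lambda>j. c * eval_map n ell v j)"
  unfolding eval_map_def by (auto simp: lin_eval_scale_right)

lemma eval_map_zero: "eval_map n ell 0 = (\<lambda>_. 0)"
  unfolding eval_map_def by (auto simp: lin_eval_zero_right)

lemma subcode_eval_map_zero_locus:
  "subcode (range (eval_map n ell)) (eval_map n ell ` zero_locus X)"
  unfolding subcode_def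
proof (intro conjI ballI allI)
  show "(\<lambda>_. 0) \<in> eval_map n ell ` zero_locus X"
    by (rule image_eqI[of _ _ 0]) (auto simp: eval_map_zero zero_locus_def lin_eval_zero_right)
next
  fix x y assume "x \<in> eval_map n ell ` zero_locus X" "y \<in> eval_map n ell ` zero_locus X"
  then obtain v w where "v \<in> zero_locus X" "w \<in> zero_locus X"
    and "x = eval_map n ell v" "y = eval_map n ell w" by blast
  then show "(\<lambda>j. x j + y j) \<in> eval_map n ell ` zero_locus X"
    by (intro image_eqI[of _ _ "v + w"]) (auto simp: eval_map_add zero_locus_def lin_eval_add_right)
next
  fix c x assume "x \<in> eval_map n ell ` zero_locus X"
  then obtain v where "v \<in> zero_locus X" "x = eval_map n ell v" by blast
  then show "(\<lambda>j. c * x j) \<in> eval_map n ell ` zero_locus X"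
    by (intro image_eqI[of _ _ "c *s v"]) (auto simp: eval_map_scale zero_locus_def lin_eval_scale_right)
qed auto

lemma Supp_subset_lessThan:
  assumes "D \<subseteq> range (eval_map n ell)"
  shows "Supp D \<subseteq> {..<n}"
  using assms unfolding Supp_def eval_map_def by (force split: if_splits)

lemma Supp_eval_map_zero_locus_subset:
  "Supp (eval_map n ell ` zero_locus X) \<subseteq> {j. j < n \<and> ell j \<notin> X}"
  unfolding Supp_def eval_map_def zero_locus_def by (auto split: if_splits)

lemma card_preimage_bij_betw:
  assumes "bij_betw ell {..<n} U" "A \<subseteq> U"
  shows "card {j. j < n \<and> ell j \<in> A} = card A"
proof -
  have "ell ` {j. j < n \<and> ell j \<in> A} = A"
    using assms unfolding bij_betw_def by auto
  moreover have "inj_on ell {j. j < n \<and> ell j \<in> A}"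
    using assms(1) unfolding bij_betw_def by (auto intro: inj_on_subset)
  ultimately show ?thesis
    using card_image by fastforce
qed

lemma card_Supp_eval_map_zero_locus_le:
  assumes "bij_betw ell {..<n} U" "A \<subseteq> U" "A \<subseteq> X"
  shows "card (Supp (eval_map n ell ` zero_locus X)) \<le> n - card A"
proof -
  have "card (Supp (eval_map n ell ` zero_locus X)) \<le> card ({..<n} - {j. j < n \<and> ell j \<in> A})"
    using Supp_eval_map_zero_locus_subset[of n ell X] assms(3) by (intro card_mono) auto
  also have "\<dots> = n - card A"
    using card_preimage_bij_betw[OF assms(1,2)] by (subst card_Diff_subset) auto
  finally show ?thesis .
qed

lemma pigeonhole_card_Int:
  fixes c :: "nat \<Rightarrow> nat"
  assumes "F \<subseteq> (\<Union>i<m. A i)" "finite F"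
    and "(\<Sum>i<m. int (c i) - 1) < int (card F)"
  obtains i where "i < m" "c i \<le> card (F \<inter> A i)"
proof (rule ccontr)
  assume "\<not> thesis"
  with that have small: "int (card (F \<inter> A i)) \<le> int (c i) - 1" if "i < m" for i
    using that by fastforce
  have "card F \<le> (\<Sum>i<m. card (F \<inter> A i))"
    using assms(1) card_UN_le[of "{..<m}" "\<lambda>i. F \<inter> A i"]
    by (metis Int_UN_distrib finite_lessThan inf.absorb1)
  then have "int (card F) \<le> (\<Sum>i<m. int (card (F \<inter> A i)))"
    by (metis of_nat_mono of_nat_sum)
  also have "\<dots> \<le> (\<Sum>i<m. int (c i) - 1)"
    by (intro sum_mono small) auto
  finally show False
    using assms(3) by linarith
qed

lemma subcode_subset_eval_map_zero_locus:
  assumes "D \<subseteq> range (eval_map n ell)" "S \<subseteq> ell ` ({..<n} - Supp D)"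
  shows "D \<subseteq> eval_map n ell ` zero_locus (vec.span S)"
proof
  fix d assume "d \<in> D"
  with assms(1) obtain v where v: "d = eval_map n ell v" by blast
  have "lin_eval s v = 0" if "s \<in> S" for s
  proof -
    obtain j where "j < n" "j \<notin> Supp D" "s = ell j"
      using assms(2) \<open>s \<in> S\<close> by blast
    then show ?thesis
      using \<open>d \<in> D\<close> v unfolding Supp_def eval_map_def by auto
  qed
  then have "v \<in> zero_locus (vec.span S)"
    using zero_locus_span[of S] unfolding zero_locus_def by blast
  then show "d \<in> eval_map n ell ` zero_locus (vec.span S)"
    using v by blast
qed

theorem proposition2p3:
  fixes m n :: nat
    and G :: "nat \<Rightarrow> ('a::field ^ 'k) set"   \<comment> \<open>G i: linearly independent generators of I(V_i)\<close>
    and L :: "nat \<Rightarrow> ('a ^ 'k) set"          \<comment> \<open>L i = Lambda_i\<close>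
    and ell :: "nat \<Rightarrow> 'a ^ 'k"                \<comment> \<open>ell 0, ..., ell (n-1) = Lambda\<close>
    and aleph :: int
  assumes infK: "infinite (UNIV :: 'a set)"
    and k2: "CARD('k) \<ge> 2"
    and G_fin: "\<forall>i<m. finite (G i)"
    and G_indep: "\<forall>i<m. vec.independent (G i)"
    and components: "\<forall>i<m. \<forall>j<m. i \<noteq> j \<longrightarrow> \<not> vec.span (G j) \<subseteq> vec.span (G i)"
    and essential: "vec.span (\<Union>i<m. G i) = UNIV"
    and aleph_def: "aleph = 1 + (\<Sum>i<m. (int (card (G i)) - 1))"
    and L_fin: "\<forall>i<m. finite (L i)"
    and L_card: "\<forall>i<m. int (card (L i)) = aleph"
    and L_sub: "\<forall>i<m. L i \<subseteq> vec.span (G i)"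
    and L_gen: "\<forall>i<m. \<forall>S. S \<subseteq> L i \<and> card S = card (G i) \<longrightarrow> vec.span S = vec.span (G i)"
    and ell_bij: "bij_betw ell {..<n} (\<Union>i<m. L i)"
  shows "(\<forall>i<m. subcode (eval_map n ell ` UNIV) (eval_map n ell ` zero_locus (vec.span (G i)))
              \<and> int (card (Supp (eval_map n ell ` zero_locus (vec.span (G i))))) \<le> (int n - aleph + 1) - 1)
         \<and> (\<forall>D. subcode (eval_map n ell ` UNIV) D \<and> int (card (Supp D)) \<le> (int n - aleph + 1) - 1
              \<longrightarrow> (\<exists>i<m. D \<subseteq> eval_map n ell ` zero_locus (vec.span (G i))))"
proof (intro conjI allI impI)
  fix i assume "i < m"
  show "subcode (range (eval_map n ell)) (eval_map n ell ` zero_locus (vec.span (G i)))"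
    by (rule subcode_eval_map_zero_locus)
  have "L i \<subseteq> (\<Union>i<m. L i)"
    using \<open>i < m\<close> by blast
  then have "card (L i) = card {j. j < n \<and> ell j \<in> L i}"
    using card_preimage_bij_betw[OF ell_bij] by simp
  also have "\<dots> \<le> n"
    by (metis (mono_tags) card_lessThan card_mono finite_lessThan lessThan_iff mem_Collect_eq subsetI)
  finally have "int (n - card (L i)) = int n - aleph"
    using L_card \<open>i < m\<close> by simp
  moreover have "card (Supp (eval_map n ell ` zero_locus (vec.span (G i)))) \<le> n - card (L i)"
    using card_Supp_eval_map_zero_locus_le[OF ell_bij \<open>L i \<subseteq> _\<close>] L_sub \<open>i < m\<close> by blast
  ultimately show "int (card (Supp (eval_map n ell ` zero_locus (vec.span (G i))))) \<le> (int n - aleph + 1) - 1"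
    by linarith
next
  fix D assume D: "subcode (range (eval_map n ell)) D \<and> int (card (Supp D)) \<le> (int n - aleph + 1) - 1"
  then have D_code: "D \<subseteq> range (eval_map n ell)"
    unfolding subcode_def by blast
  define F where "F = ell ` ({..<n} - Supp D)"
  have "inj_on ell ({..<n} - Supp D)"
    using ell_bij unfolding bij_betw_def by (auto intro: inj_on_subset)
  then have "card F = n - card (Supp D)"
    using Supp_subset_lessThan[OF D_code] unfolding F_def
    by (simp add: card_image card_Diff_subset finite_subset)
  moreover have "card (Supp D) \<le> n"
    using Supp_subset_lessThan[OF D_code] by (metis card_lessThan card_mono finite_lessThan)
  ultimately have "(\<Sum>i<m. int (card (G i)) - 1) < int (card F)"
    using D aleph_def by linarith
  moreover have "F \<subseteq> (\<Union>i<m. L i)"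
    using ell_bij unfolding F_def bij_betw_def by auto
  ultimately obtain i where "i < m" "card (G i) \<le> card (F \<inter> L i)"
    using pigeonhole_card_Int[where A = L and c = "\<lambda>i. card (G i)"] unfolding F_def by blast
  then obtain S where "S \<subseteq> F \<inter> L i" "card S = card (G i)"
    by (meson obtain_subset_with_card_n)
  then have "vec.span S = vec.span (G i)" "S \<subseteq> F"
    using L_gen \<open>i < m\<close> by auto
  then have "D \<subseteq> eval_map n ell ` zero_locus (vec.span (G i))"
    using subcode_subset_eval_map_zero_locus[OF D_code, of S] unfolding F_def by simp
  then show "\<exists>i<m. D \<subseteq> eval_map n ell ` zero_locus (vec.span (G i))"
    using \<open>i < m\<close> by blast
qed

end
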